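(* Let $d \ge 2$ and let $v_1,\ldots,v_m \in \mathbb{R}^d$ with $m \ge d$. Let $M$ be the minimum covering sphere of $\{v_1,\ldots,v_m\}$. Let $p_1, p_2 \in \mathbb{R}^d$ be two points lying outside $M$ (i.e. outside the closed ball bounded by $M$) such that the segment $\overline{p_1p_2}$ intersects the convex hull $\operatorname{conv}(\{v_1,\ldots,v_m\})$. Assume the point set $\{v_1,\ldots,v_m,p_1,p_2\}$ is in general position. Then there is no witness sphere of the segment $\overline{p_1p_2}$ with respect to the point set $\{v_1,\ldots,v_m,p_1,p_2\}$; that is, there is no sphere $W \subset \mathbb{R}^d$ with $p_1,p_2 \in W$ whose open interior contains none of the points $v_1,\ldots,v_m$.
   Context: The minimum covering sphere of a non-empty finite set $\{v_1,\ldots,v_m\}\subset\mathbb{R}^d$ is the smallest sphere such that every $v_i$ lies inside it or on it. A witness sphere of a segment (or, more generally, of a simplex) with respect to a finite point set $P$ is a sphere that contains all vertices of the segment on its boundary and contains no point of $P$ in its interior. A finite point set in $\mathbb{R}^d$ is in general position if for each $i=1,\ldots,d$ no $i+1$ of its points lie in an affine subspace of dimension $i-1$, and no $d+2$ of its points lie on a common sphere. *)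

theory Defs
  imports "HOL-Analysis.Analysis"
begin

definition min_covering_sphere :: "'a::euclidean_space set \<Rightarrow> 'a \<Rightarrow> real \<Rightarrow> bool" where
  "min_covering_sphere V c r \<longleftrightarrow>
     V \<subseteq> cball c r \<and> (\<forall>c' r'. V \<subseteq> cball c' r' \<longrightarrow> r \<le> r')"

definition general_position :: "'a::euclidean_space set \<Rightarrow> bool" where
  "general_position P \<longleftrightarrow>
     (\<forall>i\<in>{1..DIM('a)}. \<forall>S\<subseteq>P. card S = i + 1 \<longrightarrow>
        \<not> (\<exists>A. affine A \<and> aff_dim A = int i - 1 \<and> S \<subseteq> A)) \<and>
     (\<forall>S\<subseteq>P. card S = DIM('a) + 2 \<longrightarrow> \<not> (\<exists>c r. S \<subseteq> sphere c r))"

definition witness_sphere :: "'a::euclidean_space \<Rightarrow> 'a \<Rightarrow> 'a set \<Rightarrow> 'a \<Rightarrow> real \<Rightarrow> bool" where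
  "witness_sphere p1 p2 P c r \<longleftrightarrow>
     p1 \<in> sphere c r \<and> p2 \<in> sphere c r \<and> P \<inter> ball c r = {}"

end

theory Submission
  imports Defs
begin

text \<open>The difference of the squared distances to two centres w and c is an affine function
of x, so each of its sub- and superlevel sets is a halfspace, bounded by the radical hyperplane
of any two spheres centred at w and c. If the closed ball of radius r around c contains V and
V avoids the open ball of radius s around w, then this function is at least s^2 - r^2 on V,
hence on the convex hull of V. At a point of the sphere of radius s around w that lies outside
the closed ball of radius r around c it is strictly smaller, hence on the whole segment between
two such points, so that segment cannot meet the convex hull of V.\<close>

lemma dist_power2_diff_eq_inner:
  fixes w c x :: "'a::real_inner"
  shows "(dist w x)\<^sup>2 - (dist c x)\<^sup>2 = (2 *\<^sub>R (c - w)) \<bullet> x + (w \<bullet> w - c \<bullet> c)"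
  unfolding dist_norm power2_norm_eq_inner
  by (simp add: inner_diff_left inner_diff_right inner_commute algebra_simps)

lemma convex_dist_power2_diff_ge:
  fixes w c :: "'a::euclidean_space"
  shows "convex {x. t \<le> (dist w x)\<^sup>2 - (dist c x)\<^sup>2}"
  using convex_halfspace_ge[of "t - (w \<bullet> w - c \<bullet> c)" "2 *\<^sub>R (c - w)"]
  by (simp add: dist_power2_diff_eq_inner algebra_simps)

lemma convex_dist_power2_diff_lt:
  fixes w c :: "'a::euclidean_space"
  shows "convex {x. (dist w x)\<^sup>2 - (dist c x)\<^sup>2 < t}"
  using convex_halfspace_lt[of "2 *\<^sub>R (c - w)" "t - (w \<bullet> w - c \<bullet> c)"]
  by (simp add: dist_power2_diff_eq_inner algebra_simps)

lemma convex_hull_subset_dist_power2_diff_ge: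
  fixes V :: "'a::euclidean_space set"
  assumes "V \<subseteq> cball c r" and "V \<inter> ball w s = {}" and "0 \<le> s"
  shows "convex hull V \<subseteq> {x. s\<^sup>2 - r\<^sup>2 \<le> (dist w x)\<^sup>2 - (dist c x)\<^sup>2}"
proof (rule hull_minimal)
  show "convex {x. s\<^sup>2 - r\<^sup>2 \<le> (dist w x)\<^sup>2 - (dist c x)\<^sup>2}"
    by (rule convex_dist_power2_diff_ge)
  show "V \<subseteq> {x. s\<^sup>2 - r\<^sup>2 \<le> (dist w x)\<^sup>2 - (dist c x)\<^sup>2}"
  proof
    fix v assume "v \<in> V"
    with assms(1,2) have "s \<le> dist w v" "dist c v \<le> r" by auto
    with \<open>0 \<le> s\<close> have "s\<^sup>2 \<le> (dist w v)\<^sup>2" "(dist c v)\<^sup>2 \<le> r\<^sup>2"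
      by (simp_all add: power_mono)
    then show "v \<in> {x. s\<^sup>2 - r\<^sup>2 \<le> (dist w x)\<^sup>2 - (dist c x)\<^sup>2}" by simp
  qed
qed

lemma dist_power2_diff_less_outside_cball:
  fixes p :: "'a::metric_space"
  assumes "p \<in> sphere w s" and "p \<notin> cball c r" and "0 \<le> r"
  shows "(dist w p)\<^sup>2 - (dist c p)\<^sup>2 < s\<^sup>2 - r\<^sup>2"
proof -
  from assms have "dist w p = s" "r < dist c p" by simp_all
  with \<open>0 \<le> r\<close> show ?thesis by (simp add: power_strict_mono)
qed

lemma closed_segment_disjoint_convex_hull_if_empty_ball:
  fixes V :: "'a::euclidean_space set"
  assumes "V \<subseteq> cball c r" and "0 \<le> r"
    and "p1 \<notin> cball c r" and "p2 \<notin> cball c r"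
    and "p1 \<in> sphere w s" and "p2 \<in> sphere w s" and "V \<inter> ball w s = {}"
  shows "closed_segment p1 p2 \<inter> convex hull V = {}"
proof -
  have "0 \<le> s" using assms(5) by (metis mem_sphere zero_le_dist)
  have "closed_segment p1 p2 \<subseteq> {x. (dist w x)\<^sup>2 - (dist c x)\<^sup>2 < s\<^sup>2 - r\<^sup>2}"
    using dist_power2_diff_less_outside_cball[OF assms(5,3,2)]
      dist_power2_diff_less_outside_cball[OF assms(6,4,2)]
    by (simp add: closed_segment_subset convex_dist_power2_diff_lt)
  moreover have "convex hull V \<subseteq> {x. s\<^sup>2 - r\<^sup>2 \<le> (dist w x)\<^sup>2 - (dist c x)\<^sup>2}"
    using convex_hull_subset_dist_power2_diff_ge[OF assms(1,7) \<open>0 \<le> s\<close>] .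
  ultimately show ?thesis by fastforce
qed

theorem mainTheorem1:
  fixes V :: "'a::euclidean_space set" and p1 p2 c :: 'a and r :: real
  assumes "DIM('a) \<ge> 2"
    and "finite V" and "card V \<ge> DIM('a)"
    and "min_covering_sphere V c r"
    and "p1 \<notin> cball c r" and "p2 \<notin> cball c r"
    and "closed_segment p1 p2 \<inter> convex hull V \<noteq> {}"
    and "general_position (V \<union> {p1, p2})"
  shows "\<not> (\<exists>w s. witness_sphere p1 p2 (V \<union> {p1, p2}) w s)"
proof
  assume "\<exists>w s. witness_sphere p1 p2 (V \<union> {p1, p2}) w s"
  then obtain w s where "p1 \<in> sphere w s" "p2 \<in> sphere w s" "V \<inter> ball w s = {}"
    unfolding witness_sphere_def by blast
  have V_cball: "V \<subseteq> cball c r"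
    using assms(4) unfolding min_covering_sphere_def by blast
  from assms(7) have "V \<noteq> {}" by auto
  then obtain v where "v \<in> V" by blast
  with V_cball have "0 \<le> r" by (meson dist_not_less_zero mem_cball order_trans not_le subsetD)
  from closed_segment_disjoint_convex_hull_if_empty_ball[OF V_cball this assms(5,6)
      \<open>p1 \<in> sphere w s\<close> \<open>p2 \<in> sphere w s\<close> \<open>V \<inter> ball w s = {}\<close>] assms(7)
  show False by blast
qed

end
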